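(* Let $m,v>0$ and $s\geq 0$. Let $\mathfrak{n}$ be the five-dimensional real Lie algebra with basis $\{E_1,\dots,E_5\}$ whose only non-vanishing brackets (up to antisymmetry) are $$[E_1,E_2]=mE_3+sE_4,\qquad [E_1,E_3]=vE_4,\qquad [E_2,E_3]=vE_5.$$ Equip the corresponding simply connected nilpotent Lie group with the left-invariant Riemannian metric for which $\{E_1,\dots,E_5\}$ is orthonormal. Then this metric is an algebraic Ricci soliton if and only if $$s=0,\qquad v=\tfrac{\sqrt3}{2}m.$$ In that case $$c=-\tfrac32m^2,\qquad D=\mathrm{diag}\big(\tfrac58m^2,\tfrac58m^2,\tfrac54m^2,\tfrac{15}8m^2,\tfrac{15}8m^2\big),$$ where $D$ is written as a matrix with respect to the basis $\{E_1,\dots,E_5\}$.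
   Context: Let $G$ be a Lie group with Lie algebra $\mathfrak{g}$ and let $g$ be a left-invariant Riemannian metric on $G$. Let $\mathrm{Ric}$ denote the $(1,1)$ Ricci tensor of $g$, viewed as a linear endomorphism of $\mathfrak{g}$. The metric $g$ is an algebraic Ricci soliton if there are a real number $c$ and a derivation $D$ of $\mathfrak{g}$ such that $\mathrm{Ric}=c\,\mathrm{Id}+D$. The notation $\mathrm{diag}(a_1,\dots,a_5)$ denotes the diagonal matrix with these entries. *)

theory Defs
  imports Main "HOL-Analysis.Analysis"
begin

text \<open>A real Lie algebra of dimension n is described by its structure constants C
  w.r.t. a basis e_0,...,e_{n-1}: [e_i,e_j] = sum_k C i j k e_k.
  Vectors are coordinate functions nat => real (only coordinates < n matter).
  The left-invariant metric is the one making the basis orthonormal.\<close>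

definition bvec :: "nat \<Rightarrow> nat \<Rightarrow> real" where
  "bvec a = (\<lambda>k. if k = a then 1 else 0)"

definition ip :: "nat \<Rightarrow> (nat \<Rightarrow> real) \<Rightarrow> (nat \<Rightarrow> real) \<Rightarrow> real" where
  "ip n x y = (\<Sum>i<n. x i * y i)"

definition br :: "(nat \<Rightarrow> nat \<Rightarrow> nat \<Rightarrow> real) \<Rightarrow> nat \<Rightarrow> (nat \<Rightarrow> real) \<Rightarrow> (nat \<Rightarrow> real) \<Rightarrow> (nat \<Rightarrow> real)" where
  "br C n x y = (\<lambda>k. if k < n then (\<Sum>i<n. \<Sum>j<n. x i * y j * C i j k) else 0)"

text \<open>Levi-Civita connection of the left-invariant metric (Koszul formula):
  <nabla_x y, z> = 1/2 (<[x,y],z> - <[y,z],x> + <[z,x],y>).\<close>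
definition lc :: "(nat \<Rightarrow> nat \<Rightarrow> nat \<Rightarrow> real) \<Rightarrow> nat \<Rightarrow> (nat \<Rightarrow> real) \<Rightarrow> (nat \<Rightarrow> real) \<Rightarrow> (nat \<Rightarrow> real)" where
  "lc C n x y = (\<lambda>k. if k < n then
      (ip n (br C n x y) (bvec k) - ip n (br C n y (bvec k)) x + ip n (br C n (bvec k) x) y) / 2
     else 0)"

definition curv :: "(nat \<Rightarrow> nat \<Rightarrow> nat \<Rightarrow> real) \<Rightarrow> nat \<Rightarrow> (nat \<Rightarrow> real) \<Rightarrow> (nat \<Rightarrow> real) \<Rightarrow> (nat \<Rightarrow> real) \<Rightarrow> (nat \<Rightarrow> real)" where
  "curv C n x y z = (\<lambda>k. lc C n x (lc C n y z) k - lc C n y (lc C n x z) k - lc C n (br C n x y) z k)"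

definition ric_form :: "(nat \<Rightarrow> nat \<Rightarrow> nat \<Rightarrow> real) \<Rightarrow> nat \<Rightarrow> (nat \<Rightarrow> real) \<Rightarrow> (nat \<Rightarrow> real) \<Rightarrow> real" where
  "ric_form C n y z = (\<Sum>a<n. ip n (curv C n (bvec a) y z) (bvec a))"

text \<open>Matrix of the (1,1) Ricci tensor in the orthonormal basis:
  entry (i,j) = <Ric(e_j), e_i> = ric(e_j, e_i).\<close>
definition ricci_mat :: "(nat \<Rightarrow> nat \<Rightarrow> nat \<Rightarrow> real) \<Rightarrow> nat \<Rightarrow> nat \<Rightarrow> nat \<Rightarrow> real" where
  "ricci_mat C n i j = ric_form C n (bvec j) (bvec i)"

definition mapp :: "nat \<Rightarrow> (nat \<Rightarrow> nat \<Rightarrow> real) \<Rightarrow> (nat \<Rightarrow> real) \<Rightarrow> (nat \<Rightarrow> real)" where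
  "mapp n D x = (\<lambda>k. if k < n then (\<Sum>l<n. D k l * x l) else 0)"

definition is_derivation :: "(nat \<Rightarrow> nat \<Rightarrow> nat \<Rightarrow> real) \<Rightarrow> nat \<Rightarrow> (nat \<Rightarrow> nat \<Rightarrow> real) \<Rightarrow> bool" where
  "is_derivation C n D \<longleftrightarrow>
     (\<forall>x y. \<forall>k<n. mapp n D (br C n x y) k = br C n (mapp n D x) y k + br C n x (mapp n D y) k)"

definition alg_ricci_soliton :: "(nat \<Rightarrow> nat \<Rightarrow> nat \<Rightarrow> real) \<Rightarrow> nat \<Rightarrow> real \<Rightarrow> (nat \<Rightarrow> nat \<Rightarrow> real) \<Rightarrow> bool" where
  "alg_ricci_soliton C n c D \<longleftrightarrow> is_derivation C n D \<and>
     (\<forall>i<n. \<forall>j<n. ricci_mat C n i j = c * (if i = j then 1 else 0) + D i j)"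

text \<open>Structure constants of the 5-dim nilpotent algebra (E_1..E_5 = indices 0..4):
  [E1,E2] = m E3 + s E4, [E1,E3] = v E4, [E2,E3] = v E5.\<close>
definition nC :: "real \<Rightarrow> real \<Rightarrow> real \<Rightarrow> nat \<Rightarrow> nat \<Rightarrow> nat \<Rightarrow> real" where
  "nC m s v i j k =
     (if (i, j, k) = (0, 1, 2) then m else if (i, j, k) = (1, 0, 2) then - m
      else if (i, j, k) = (0, 1, 3) then s else if (i, j, k) = (1, 0, 3) then - s
      else if (i, j, k) = (0, 2, 3) then v else if (i, j, k) = (2, 0, 3) then - v
      else if (i, j, k) = (1, 2, 4) then v else if (i, j, k) = (2, 1, 4) then - v
      else 0)"

end

theory Submission
  imports Defs
begin

text \<open>The Koszul formula gives the Ricci operator of the orthonormal basis explicitly; it is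
  diagonal except for the entries coupling E2,E3 (proportional to s v) and E3,E4 (proportional
  to m s). If Ric = c Id + D, the derivation identity for D on the brackets [E1,E3], [E1,E2]
  and again [E1,E3] yields in turn m s v = 0, then the eigenvalue relations
  D(E3) = D(E1) + D(E2) and D(E4) = D(E1) + D(E3), which pin down c and v. Conversely the
  diagonal D is a derivation because its eigenvalues are additive along every non-zero bracket.\<close>

lemma sum_lessThan_5: "(\<Sum>i<(5::nat). f i) = f 0 + f 1 + f 2 + f 3 + (f 4 :: real)"
  by (simp add: eval_nat_numeral)

lemma less_5_cases: "i < (5::nat) \<Longrightarrow> i = 0 \<or> i = 1 \<or> i = 2 \<or> i = 3 \<or> i = 4"
  by arith

lemma sum_bvec_left:
  assumes "b < n"
  shows "(\<Sum>j<n. bvec b j * f j) = f b"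
proof -
  have "(\<Sum>j<n. bvec b j * f j) = (\<Sum>j<n. if j = b then f j else 0)"
    by (rule sum.cong) (auto simp: bvec_def)
  also have "\<dots> = f b"
    using assms by (simp add: sum.delta')
  finally show ?thesis .
qed

lemma br_bvec_left: "a < n \<Longrightarrow> k < n \<Longrightarrow> br C n (bvec a) y k = (\<Sum>j<n. y j * C a j k)"
  by (simp add: br_def mult.assoc sum_bvec_left sum_distrib_left[symmetric])

lemma br_bvec_right: "b < n \<Longrightarrow> k < n \<Longrightarrow> br C n x (bvec b) k = (\<Sum>i<n. x i * C i b k)"
  by (simp add: br_def mult.assoc mult.left_commute[of "bvec b _"] sum_bvec_left
      sum_distrib_left[symmetric])

lemma mapp_bvec:
  assumes "a < n"
  shows "mapp n D (bvec a) = (\<lambda>k. if k < n then D k a else 0)"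
proof -
  have "(\<Sum>l<n. D k l * bvec a l) = D k a" for k
    using assms sum_bvec_left[of a n "D k"] by (simp add: mult.commute)
  then show ?thesis
    by (simp only: mapp_def)
qed

lemma derivation_on_basis:
  assumes "is_derivation C n D" "a < n" "b < n" "k < n"
  shows "(\<Sum>l<n. D k l * C a b l) = (\<Sum>l<n. D l a * C l b k) + (\<Sum>l<n. D l b * C a l k)"
proof -
  have "mapp n D (br C n (bvec a) (bvec b)) k
      = br C n (mapp n D (bvec a)) (bvec b) k + br C n (bvec a) (mapp n D (bvec b)) k"
    using assms unfolding is_derivation_def by blast
  then show ?thesis
    unfolding mapp_bvec[OF assms(2)] mapp_bvec[OF assms(3)]
    using assms by (simp add: mapp_def br_bvec_left br_bvec_right sum_bvec_left)
qed

lemma mapp_diagonal: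
  "mapp n (\<lambda>i j. if i = j then d i else 0) x = (\<lambda>k. if k < n then d k * x k else 0)"
proof (rule ext)
  fix k
  have "(\<Sum>l<n. (if k = l then d k else 0) * x l) = (\<Sum>l<n. if k = l then d k * x k else 0)"
    by (rule sum.cong) auto
  then show "mapp n (\<lambda>i j. if i = j then d i else 0) x k = (if k < n then d k * x k else 0)"
    by (simp add: mapp_def)
qed

lemma diagonal_is_derivation:
  assumes additive: "\<And>i j k. i < n \<Longrightarrow> j < n \<Longrightarrow> k < n \<Longrightarrow> C i j k \<noteq> 0 \<Longrightarrow> d k = d i + d j"
  shows "is_derivation C n (\<lambda>i j. if i = j then d i else 0)"
  unfolding is_derivation_def
proof (intro allI impI)
  fix x y :: "nat \<Rightarrow> real" and k
  assume k: "k < n"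
  let ?D = "\<lambda>i j. if i = j then d i else 0"
  have term_eq: "d k * (x i * y j * C i j k) = d i * x i * y j * C i j k + x i * (d j * y j) * C i j k"
    if "i < n" "j < n" for i j
    using additive[OF that k] by (cases "C i j k = 0") (simp_all add: algebra_simps)
  have "mapp n ?D (br C n x y) k = d k * (\<Sum>i<n. \<Sum>j<n. x i * y j * C i j k)"
    using k by (simp add: mapp_diagonal br_def)
  also have "\<dots> = (\<Sum>i<n. \<Sum>j<n. d k * (x i * y j * C i j k))"
    by (simp only: sum_distrib_left)
  also have "\<dots> = (\<Sum>i<n. \<Sum>j<n. d i * x i * y j * C i j k + x i * (d j * y j) * C i j k)"
    by (intro sum.cong refl) (simp add: term_eq)
  also have "\<dots> = (\<Sum>i<n. \<Sum>j<n. d i * x i * y j * C i j k)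
      + (\<Sum>i<n. \<Sum>j<n. x i * (d j * y j) * C i j k)"
    by (simp only: sum.distrib)
  also have "\<dots> = br C n (mapp n ?D x) y k + br C n x (mapp n ?D y) k"
    using k by (simp add: mapp_diagonal br_def)
  finally show "mapp n ?D (br C n x y) k = br C n (mapp n ?D x) y k + br C n x (mapp n ?D y) k" .
qed

lemma alg_ricci_soliton_derivation_eq:
  assumes "alg_ricci_soliton C n c D" "i < n" "j < n"
  shows "D i j = ricci_mat C n i j - c * (if i = j then 1 else 0)"
  using assms unfolding alg_ricci_soliton_def by simp

lemma ip_5: "ip 5 x y = x 0 * y 0 + x 1 * y 1 + x 2 * y 2 + x 3 * y 3 + x 4 * y 4"
  unfolding ip_def sum_lessThan_5 by simp

lemma br_nC: "br (nC m s v) 5 x y = (\<lambda>k.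
    if k = 2 then m * (x 0 * y 1 - x 1 * y 0)
    else if k = 3 then s * (x 0 * y 1 - x 1 * y 0) + v * (x 0 * y 2 - x 2 * y 0)
    else if k = 4 then v * (x 1 * y 2 - x 2 * y 1)
    else 0)"
  unfolding br_def sum_lessThan_5 by (auto simp: nC_def algebra_simps)

lemma lc_nC: "lc (nC m s v) 5 x y = (\<lambda>k.
    if k = 0 then (m * (x 1 * y 2 + x 2 * y 1) + s * (x 1 * y 3 + x 3 * y 1) + v * (x 2 * y 3 + x 3 * y 2)) / 2
    else if k = 1 then (- m * (x 0 * y 2 + x 2 * y 0) - s * (x 0 * y 3 + x 3 * y 0) + v * (x 2 * y 4 + x 4 * y 2)) / 2
    else if k = 2 then (m * (x 0 * y 1 - x 1 * y 0) - v * (x 0 * y 3 + x 3 * y 0) - v * (x 1 * y 4 + x 4 * y 1)) / 2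
    else if k = 3 then (s * (x 0 * y 1 - x 1 * y 0) + v * (x 0 * y 2 - x 2 * y 0)) / 2
    else if k = 4 then v * (x 1 * y 2 - x 2 * y 1) / 2
    else 0)" (is "_ = ?R")
proof (rule ext)
  fix k
  show "lc (nC m s v) 5 x y k = ?R k"
  proof (cases "k < 5")
    case True
    then show ?thesis
      using less_5_cases[OF True] by (elim disjE) (simp_all add: lc_def br_nC ip_5 bvec_def field_simps)
  qed (simp add: lc_def)
qed

definition nC_ricci :: "real \<Rightarrow> real \<Rightarrow> real \<Rightarrow> nat \<Rightarrow> nat \<Rightarrow> real" where
  "nC_ricci m s v i j =
    [[- (m\<^sup>2 + s\<^sup>2 + v\<^sup>2) / 2, 0, 0, 0, 0],
     [0, - (m\<^sup>2 + s\<^sup>2 + v\<^sup>2) / 2, - s * v / 2, 0, 0],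
     [0, - s * v / 2, m\<^sup>2 / 2 - v\<^sup>2, m * s / 2, 0],
     [0, 0, m * s / 2, (s\<^sup>2 + v\<^sup>2) / 2, 0],
     [0, 0, 0, 0, v\<^sup>2 / 2]] ! i ! j"

lemma ricci_mat_nC:
  assumes "i < 5" "j < 5"
  shows "ricci_mat (nC m s v) 5 i j = nC_ricci m s v i j"
  using less_5_cases[OF assms(1)] less_5_cases[OF assms(2)]
  by (elim disjE) (simp_all add: ricci_mat_def ric_form_def sum_lessThan_5 curv_def ip_5 lc_nC br_nC
      nC_ricci_def bvec_def field_simps power2_eq_square)

lemma nC_derivation_equations:
  assumes "is_derivation (nC m s v) 5 D"
  shows "v * D 2 3 = m * D 1 2"
    and "m * D 2 2 + s * D 2 3 = m * D 0 0 + m * D 1 1"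
    and "v * D 3 3 = v * D 0 0 + s * D 1 2 + v * D 2 2"
  using derivation_on_basis[OF assms, of 0 2 2] derivation_on_basis[OF assms, of 0 1 2]
    derivation_on_basis[OF assms, of 0 2 3]
  by (simp_all add: sum_lessThan_5 nC_def algebra_simps)

lemma nC_soliton_derivation_eq:
  assumes "alg_ricci_soliton (nC m s v) 5 c D" "i < 5" "j < 5"
  shows "D i j = nC_ricci m s v i j - c * (if i = j then 1 else 0)"
  using alg_ricci_soliton_derivation_eq[OF assms] ricci_mat_nC[OF assms(2,3)] by simp

lemma nC_soliton_necessary:
  assumes "m > 0" "v > 0" and soliton: "alg_ricci_soliton (nC m s v) 5 c D"
  shows "s = 0 \<and> v\<^sup>2 = 3/4 * m\<^sup>2 \<and> c = - 3/2 * m\<^sup>2"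
proof -
  note D = nC_soliton_derivation_eq[OF soliton, simplified nC_ricci_def, simplified]
  have der: "is_derivation (nC m s v) 5 D"
    using soliton unfolding alg_ricci_soliton_def by blast
  have "m * s * v = 0"
    using nC_derivation_equations(1)[OF der] D[of 2 3] D[of 1 2] by (simp add: algebra_simps)
  with assms(1,2) have s: "s = 0"
    by simp
  have "m * D 2 2 = m * (D 0 0 + D 1 1)"
    using nC_derivation_equations(2)[OF der] s by (simp add: distrib_left)
  with assms(1) have "D 2 2 = D 0 0 + D 1 1"
    by simp
  then have c: "c = - 3/2 * m\<^sup>2"
    using D[of 0 0] D[of 1 1] D[of 2 2] s by (simp add: field_simps)
  have "v * D 3 3 = v * (D 0 0 + D 2 2)"
    using nC_derivation_equations(3)[OF der] s by (simp add: distrib_left)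
  with assms(2) have "D 3 3 = D 0 0 + D 2 2"
    by simp
  then have "v\<^sup>2 = 3/4 * m\<^sup>2"
    using D[of 0 0] D[of 2 2] D[of 3 3] s c by (simp add: field_simps)
  with s c show ?thesis
    by simp
qed

abbreviation nC_soliton_spectrum :: "real \<Rightarrow> real list" where
  "nC_soliton_spectrum m \<equiv> [5/8 * m\<^sup>2, 5/8 * m\<^sup>2, 5/4 * m\<^sup>2, 15/8 * m\<^sup>2, 15/8 * m\<^sup>2]"

lemma nC_soliton_derivation_unique:
  assumes soliton: "alg_ricci_soliton (nC m 0 v) 5 (- 3/2 * m\<^sup>2) D" and v: "v\<^sup>2 = 3/4 * m\<^sup>2"
    and "i < 5" "j < 5"
  shows "D i j = (if i = j then nC_soliton_spectrum m ! i else 0)"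
  using less_5_cases[OF assms(3)] less_5_cases[OF assms(4)] nC_soliton_derivation_eq[OF soliton assms(3,4)]
  by (elim disjE) (simp_all add: nC_ricci_def v field_simps)

lemma nC_soliton_sufficient:
  assumes v: "v\<^sup>2 = 3/4 * m\<^sup>2"
  shows "alg_ricci_soliton (nC m 0 v) 5 (- 3/2 * m\<^sup>2)
    (\<lambda>i j. if i = j then nC_soliton_spectrum m ! i else 0)"
  unfolding alg_ricci_soliton_def
proof (intro conjI allI impI)
  show "is_derivation (nC m 0 v) 5
      (\<lambda>i j. if i = j then nC_soliton_spectrum m ! i else 0)"
    by (rule diagonal_is_derivation) (auto simp: nC_def split: if_splits)
next
  fix i j :: nat
  assume "i < 5" "j < 5"
  then show "ricci_mat (nC m 0 v) 5 i j = - 3/2 * m\<^sup>2 * (if i = j then 1 else 0)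
      + (if i = j then nC_soliton_spectrum m ! i else 0)"
    using less_5_cases[OF \<open>i < 5\<close>] less_5_cases[OF \<open>j < 5\<close>]
    by (elim disjE) (simp_all add: ricci_mat_nC nC_ricci_def v field_simps)
qed

lemma eq_sqrt3_half_iff:
  fixes m v :: real
  assumes "0 \<le> m" "0 \<le> v"
  shows "v = sqrt 3 / 2 * m \<longleftrightarrow> v\<^sup>2 = 3/4 * m\<^sup>2"
proof
  assume "v\<^sup>2 = 3/4 * m\<^sup>2"
  then have "v\<^sup>2 = (sqrt 3 / 2 * m)\<^sup>2"
    by (simp add: power_mult_distrib power_divide)
  then show "v = sqrt 3 / 2 * m"
    using assms by (simp add: power2_eq_iff_nonneg)
next
  assume "v = sqrt 3 / 2 * m"
  moreover have "(sqrt 3 / 2 * m)\<^sup>2 = 3/4 * m\<^sup>2"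
    by (simp add: power_mult_distrib power_divide)
  ultimately show "v\<^sup>2 = 3/4 * m\<^sup>2"
    by metis
qed

theorem mainTheorem10:
  fixes m s v :: real
  assumes "m > 0" and "v > 0" and "s \<ge> 0"
  shows "((\<exists>c D. alg_ricci_soliton (nC m s v) 5 c D) \<longleftrightarrow> (s = 0 \<and> v = sqrt 3 / 2 * m))
       \<and> (\<forall>c D. alg_ricci_soliton (nC m s v) 5 c D \<longrightarrow>
            c = - 3 / 2 * m\<^sup>2 \<and>
            (\<forall>i<5. \<forall>j<5. D i j = (if i = j then [5/8 * m\<^sup>2, 5/8 * m\<^sup>2, 5/4 * m\<^sup>2, 15/8 * m\<^sup>2, 15/8 * m\<^sup>2] ! i else 0)))"
proof -
  have v: "v = sqrt 3 / 2 * m \<longleftrightarrow> v\<^sup>2 = 3/4 * m\<^sup>2"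
    using assms by (intro eq_sqrt3_half_iff) simp_all
  have "(\<exists>c D. alg_ricci_soliton (nC m s v) 5 c D) \<longleftrightarrow> (s = 0 \<and> v = sqrt 3 / 2 * m)"
    using nC_soliton_necessary[OF assms(1,2)] nC_soliton_sufficient v by blast
  moreover have "c = - 3 / 2 * m\<^sup>2 \<and>
      (\<forall>i<5. \<forall>j<5. D i j = (if i = j then nC_soliton_spectrum m ! i else 0))"
    if soliton: "alg_ricci_soliton (nC m s v) 5 c D" for c D
    using nC_soliton_necessary[OF assms(1,2) soliton] nC_soliton_derivation_unique soliton by blast
  ultimately show ?thesis
    by blast
qed

end
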